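(* Let $\mathbf w$ be a colored involution, and for integers $i,j$ let $a_i$ be the number of biletters $\binom{i}{i}$, $b_i$ the number of biletters $\binom{i}{\bar i}$, and, for $i\ne j$, $c_{ij}$ the number of biletters $\binom{i}{j}$ and $d_{ij}$ the number of biletters $\binom{i}{\bar j}$ in $\mathbf w$ (so $c_{ij}=c_{ji}$, $d_{ij}=d_{ji}$). Then the bottom row of $\mathbf w^{st}$ is an involution in $B_n$ with $a$ fixed points, $b$ barred fixed points, $c$ two-cycles and $d$ barred two-cycles, where \[ a=\sum_i a_i,\quad b=\sum_i\Big(b_i-2\Big\lfloor\frac{b_i}{2}\Big\rfloor\Big),\quad c=\sum_{i<j}c_{ij},\quad d=\sum_{i<j}d_{ij}+\sum_i\Big\lfloor\frac{b_i}{2}\Big\rfloor. \]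
   Context: Letters are positive integers, possibly barred; for a letter $y$, $y^{neg}$ is $y$ if unbarred and $-m$ if $y=\bar m$; $|y|$ is the underlying integer. A biletter is a pair $\binom{x}{y}$ of letters. A doubly colored biword is a finite sequence of biletters in canonical order: $\binom{x}{y}$ precedes $\binom{k}{l}$ iff $|x|<|k|$, or $|x|=|k|$ with $x$ barred and $k$ unbarred, or $x=k$ both unbarred and $y^{neg}<l^{neg}$, or $x=k$ both barred and $l^{neg}<y^{neg}$. A colored biword is a doubly colored biword whose top letters are all unbarred; $n$ denotes its length. Operations: $\mathbf w^{\overline{st}}$ replaces the top letters, read left to right, by $1,2,\dots$ keeping their bars; $\mathbf w^{inv}$ swaps the two letters of each biletter (bars travel with letters) and reorders canonically; for a colored biword, $\mathbf w^{inv_r}$ replaces each biletter $\binom{x}{y}$ by $\binom{|y|}{x'}$ where $x'$ is $x$ barred iff $y$ is barred, and reorders canonically. $\mathbf w$ is a colored involution if $\mathbf w^{inv_r}=\mathbf w$. The standardisation is $\mathbf w^{st}=(((\mathbf w^{\overline{st}})^{inv})^{\overline{st}})^{inv}$; it has top row $1,\dots,n$ and bottom row a word $\pi$ in letters $\{1,\dots,n,\bar1,\dots,\bar n\}$ using each $k\in[n]$ exactly once (an element of $B_n$). Such $\pi$ is an involution if for each $k$: $\pi_k=k$ (fixed point), $\pi_k=\bar k$ (barred fixed point), or for some $l\ne k$, $\pi_k=l,\pi_l=k$ (two-cycle) or $\pi_k=\bar l,\pi_l=\bar k$ (barred two-cycle). *)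

theory Defs
  imports Main "HOL-Library.Multiset" "HOL-Library.Product_Lexorder"
begin

(* Letters: U m is the unbarred letter m, B m is the barred letter \<bar>m.
   Letters are required to be positive (|y| \<ge> 1) by the well-formedness predicates below. *)
datatype letter = U nat | B nat

fun absl :: "letter \<Rightarrow> nat" where
  "absl (U m) = m" | "absl (B m) = m"

fun barred :: "letter \<Rightarrow> bool" where
  "barred (U m) = False" | "barred (B m) = True"

fun negl :: "letter \<Rightarrow> int" where
  "negl (U m) = int m" | "negl (B m) = - int m"

type_synonym biletter = "letter \<times> letter"   (* (top, bottom) *)

definition prec :: "biletter \<Rightarrow> biletter \<Rightarrow> bool" where
  "prec p q \<longleftrightarrow> (let (x, y) = p; (k, l) = q in
      absl x < absl k
    \<or> (absl x = absl k \<and> barred x \<and> \<not> barred k)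
    \<or> (x = k \<and> \<not> barred x \<and> \<not> barred k \<and> negl y < negl l)
    \<or> (x = k \<and> barred x \<and> barred k \<and> negl l < negl y))"

definition canonical :: "biletter list \<Rightarrow> bool" where
  "canonical w \<longleftrightarrow> sorted_wrt (\<lambda>p q. \<not> prec q p) w"

(* sort key realising the canonical order lexicographically: prec p q \<longleftrightarrow> bkey p < bkey q *)
definition bkey :: "biletter \<Rightarrow> int \<times> int \<times> int" where
  "bkey p = (let (x, y) = p in
     (int (absl x), (if barred x then 0 else 1), (if barred x then - negl y else negl y)))"

definition canon :: "biletter list \<Rightarrow> biletter list" where
  "canon w = sort_key bkey w"

definition pos_letters :: "biletter list \<Rightarrow> bool" where
  "pos_letters w \<longleftrightarrow> (\<forall>(x, y) \<in> set w. absl x \<ge> 1 \<and> absl y \<ge> 1)"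

definition doubly_colored_biword :: "biletter list \<Rightarrow> bool" where
  "doubly_colored_biword w \<longleftrightarrow> canonical w \<and> pos_letters w"

definition colored_biword :: "biletter list \<Rightarrow> bool" where
  "colored_biword w \<longleftrightarrow> doubly_colored_biword w \<and> (\<forall>(x, y) \<in> set w. \<not> barred x)"

definition st_bar :: "biletter list \<Rightarrow> biletter list" where
  "st_bar w = map (\<lambda>i. let (x, y) = w ! i in
                         ((if barred x then B (Suc i) else U (Suc i)), y)) [0..<length w]"

definition inv_bw :: "biletter list \<Rightarrow> biletter list" where
  "inv_bw w = canon (map (\<lambda>(x, y). (y, x)) w)"

definition inv_r :: "biletter list \<Rightarrow> biletter list" where
  "inv_r w = canon (map (\<lambda>(x, y). (U (absl y), (if barred y then B (absl x) else U (absl x)))) w)"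

definition colored_involution :: "biletter list \<Rightarrow> bool" where
  "colored_involution w \<longleftrightarrow> colored_biword w \<and> inv_r w = w"

definition st :: "biletter list \<Rightarrow> biletter list" where
  "st w = inv_bw (st_bar (inv_bw (st_bar w)))"

(* the bottom row of a biword, as a 1-indexed word *)
definition bottom :: "biletter list \<Rightarrow> nat \<Rightarrow> letter" where
  "bottom w k = snd (w ! (k - 1))"

definition in_Bn :: "nat \<Rightarrow> (nat \<Rightarrow> letter) \<Rightarrow> bool" where
  "in_Bn n \<pi> \<longleftrightarrow> bij_betw (\<lambda>k. absl (\<pi> k)) {1..n} {1..n}"

definition is_involution :: "nat \<Rightarrow> (nat \<Rightarrow> letter) \<Rightarrow> bool" where
  "is_involution n \<pi> \<longleftrightarrow> (\<forall>k \<in> {1..n}. \<pi> k = U k \<or> \<pi> k = B k \<or>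
      (\<exists>l \<in> {1..n}. l \<noteq> k \<and> ((\<pi> k = U l \<and> \<pi> l = U k) \<or> (\<pi> k = B l \<and> \<pi> l = B k))))"

definition fixed_points :: "nat \<Rightarrow> (nat \<Rightarrow> letter) \<Rightarrow> nat" where
  "fixed_points n \<pi> = card {k \<in> {1..n}. \<pi> k = U k}"

definition barred_fixed_points :: "nat \<Rightarrow> (nat \<Rightarrow> letter) \<Rightarrow> nat" where
  "barred_fixed_points n \<pi> = card {k \<in> {1..n}. \<pi> k = B k}"

definition two_cycles :: "nat \<Rightarrow> (nat \<Rightarrow> letter) \<Rightarrow> nat" where
  "two_cycles n \<pi> = card {(k, l). k \<in> {1..n} \<and> l \<in> {1..n} \<and> k < l \<and> \<pi> k = U l \<and> \<pi> l = U k}"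

definition barred_two_cycles :: "nat \<Rightarrow> (nat \<Rightarrow> letter) \<Rightarrow> nat" where
  "barred_two_cycles n \<pi> = card {(k, l). k \<in> {1..n} \<and> l \<in> {1..n} \<and> k < l \<and> \<pi> k = B l \<and> \<pi> l = B k}"

(* the integers occurring (as underlying values of letters) in w; all counts vanish outside *)
definition vals :: "biletter list \<Rightarrow> nat set" where
  "vals w = absl ` fst ` set w \<union> absl ` snd ` set w"

definition acnt :: "biletter list \<Rightarrow> nat \<Rightarrow> nat" where
  "acnt w i = count (mset w) (U i, U i)"
definition bcnt :: "biletter list \<Rightarrow> nat \<Rightarrow> nat" where
  "bcnt w i = count (mset w) (U i, B i)"
definition ccnt :: "biletter list \<Rightarrow> nat \<Rightarrow> nat \<Rightarrow> nat" where
  "ccnt w i j = count (mset w) (U i, U j)"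
definition dcnt :: "biletter list \<Rightarrow> nat \<Rightarrow> nat \<Rightarrow> nat" where
  "dcnt w i j = count (mset w) (U i, B j)"

end

theory Submission
  imports Defs
begin

text \<open>
  Let \<open>\<rho>\<close> be the biletter map underlying \<open>inv\<^sub>r\<close>. Standardisation turns the \<open>k\<close>-th
  biletter \<open>w\<^sub>k\<close> of \<open>w\<close> into \<open>(k, \<plusminus>\<tau>(k))\<close>, with the bar of the bottom letter of \<open>w\<^sub>k\<close>,
  where \<open>\<tau>(k)\<close> is the position in \<open>w\<close> of a copy of \<open>\<rho>(w\<^sub>k)\<close>. Since \<open>w\<close> is fixed by
  \<open>inv\<^sub>r\<close>, the biletters \<open>(i, j)\<close> and \<open>(j, i)\<close> occur equally often, and so do their
  versions with barred bottom letters; \<open>\<tau>\<close> matches these copies in the same order when the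
  bottom letter is unbarred and in reverse order when it is barred (after inversion, barred
  top letters are sorted by decreasing bottom letter). Hence \<open>\<tau>\<close> is an involution: its fixed
  points are the copies of \<open>(i, i)\<close> and the middle copy of an odd run of \<open>(i, B i)\<close>, and the
  remaining copies of \<open>(i, B i)\<close> pair up into \<open>\<lfloor>b\<^sub>i/2\<rfloor>\<close> barred two-cycles.
\<close>

section \<open>Ranks in sorted lists\<close>

definition occ_index :: "'a list \<Rightarrow> nat \<Rightarrow> nat" where
  "occ_index xs k = card {k'. k' < k \<and> xs ! k' = xs ! k}"

lemma count_mset_eq_card_positions:
  "count (mset xs) q = card {k. k < length xs \<and> xs ! k = q}"
  by (simp add: count_mset count_list_eq_length_filter length_filter_conv_card eq_commute)

lemma occ_index_less_count: "k < length xs \<Longrightarrow> occ_index xs k < count (mset xs) (xs ! k)"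
  unfolding occ_index_def count_mset_eq_card_positions by (rule psubset_card_mono) auto

lemma occ_index_strict_mono:
  "k1 < k2 \<Longrightarrow> xs ! k1 = xs ! k2 \<Longrightarrow> occ_index xs k1 < occ_index xs k2"
  unfolding occ_index_def by (rule psubset_card_mono) auto

lemma bij_betw_occ_index:
  "bij_betw (occ_index xs) {k. k < length xs \<and> xs ! k = q} {..<count (mset xs) q}"
proof -
  let ?P = "{k. k < length xs \<and> xs ! k = q}"
  have inj: "inj_on (occ_index xs) ?P"
    by (intro inj_onI) (metis (mono_tags, lifting) linorder_neqE_nat mem_Collect_eq
        occ_index_strict_mono order.irrefl)
  moreover have "occ_index xs ` ?P \<subseteq> {..<count (mset xs) q}"
    using occ_index_less_count by fastforce
  moreover have "card (occ_index xs ` ?P) = card {..<count (mset xs) q}"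
    using inj by (simp add: card_image count_mset_eq_card_positions)
  ultimately show ?thesis
    by (simp add: bij_betw_def card_subset_eq)
qed

lemma card_positions_occ_index:
  assumes "finite V" "inj_on f V"
  shows "card {k. k < length xs \<and> (\<exists>i\<in>V. xs ! k = f i \<and> Q i (occ_index xs k))}
       = (\<Sum>i\<in>V. card {t. t < count (mset xs) (f i) \<and> Q i t})"
proof -
  let ?P = "\<lambda>i. {k. k < length xs \<and> xs ! k = f i \<and> Q i (occ_index xs k)}"
  have "{k. k < length xs \<and> (\<exists>i\<in>V. xs ! k = f i \<and> Q i (occ_index xs k))} = (\<Union>i\<in>V. ?P i)"
    by auto
  moreover have "card (\<Union>i\<in>V. ?P i) = (\<Sum>i\<in>V. card (?P i))"
    using assms by (intro card_UN_disjoint) (auto dest: inj_onD)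
  moreover have "card (?P i) = card {t. t < count (mset xs) (f i) \<and> Q i t}" for i
  proof -
    have bij: "bij_betw (occ_index xs) {k. k < length xs \<and> xs ! k = f i} {..<count (mset xs) (f i)}"
      by (rule bij_betw_occ_index)
    then have "occ_index xs ` ?P i = {t. t < count (mset xs) (f i) \<and> Q i t}"
      by (auto simp: bij_betw_def)
    moreover have "inj_on (occ_index xs) (?P i)"
      using bij by (auto simp: bij_betw_def intro: inj_on_subset)
    ultimately show ?thesis using card_image by fastforce
  qed
  ultimately show ?thesis by simp
qed

lemma card_positions_in_image:
  assumes "finite V" "inj_on f V"
  shows "card {k. k < length xs \<and> (\<exists>i\<in>V. xs ! k = f i)} = (\<Sum>i\<in>V. count (mset xs) (f i))"
  using card_positions_occ_index[OF assms, where Q = "\<lambda>_ _. True"] by simp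

lemma sorted_nth_eq_rank_plus_occ_index:
  fixes f :: "'a \<Rightarrow> 'b::linorder"
  assumes sorted: "sorted (map f xs)" and inj: "inj_on f (set xs)" and k: "k < length xs"
  shows "k = length (filter (\<lambda>y. f y < f (xs ! k)) xs) + occ_index xs k"
proof -
  let ?below = "{k'. k' < length xs \<and> f (xs ! k') < f (xs ! k)}"
  let ?equal = "{k'. k' < k \<and> xs ! k' = xs ! k}"
  have mono: "f (xs ! i) \<le> f (xs ! j)" if "i \<le> j" "j < length xs" for i j
    using sorted_nth_mono[OF sorted that(1)] that by simp
  have "{..<k} = ?below \<union> ?equal"
  proof (intro equalityI subsetI)
    fix k' assume "k' \<in> {..<k}"
    then have "k' < k" by simp
    with k mono[of k' k] inj show "k' \<in> ?below \<union> ?equal"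
      by (auto simp: le_less dest: inj_onD)
  next
    fix k' assume "k' \<in> ?below \<union> ?equal"
    with k mono[of k k'] show "k' \<in> {..<k}"
      by (auto simp: not_less[symmetric])
  qed
  moreover have "?below \<inter> ?equal = {}" by auto
  ultimately have "k = card ?below + card ?equal"
    by (metis card_Un_disjoint card_lessThan finite_Collect_conjI finite_Collect_less_nat)
  then show ?thesis by (simp add: length_filter_conv_card occ_index_def)
qed

lemma nth_sort_key_rank:
  fixes f :: "'a \<Rightarrow> 'b::linorder"
  assumes distinct: "distinct (map f xs)" and x: "x \<in> set xs"
  shows "sort_key f xs ! length (filter (\<lambda>y. f y < f x) xs) = x"
proof -
  let ?ys = "sort_key f xs"
  obtain j where j: "j < length ?ys" "?ys ! j = x"
    using x by (metis in_set_conv_nth set_sort)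
  have "distinct (map f ?ys)"
    using distinct by (metis mset_sort mset_map mset_eq_imp_distinct_iff)
  then have inj: "inj_on f (set ?ys)" and "distinct ?ys"
    by (simp_all add: distinct_map)
  then have "occ_index ?ys j = 0"
    using j(1) by (auto simp: occ_index_def nth_eq_iff_index_eq)
  then have "j = length (filter (\<lambda>y. f y < f x) ?ys)"
    using sorted_nth_eq_rank_plus_occ_index[OF _ inj j(1)] j(2) by simp
  also have "\<dots> = length (filter (\<lambda>y. f y < f x) xs)"
    by (metis mset_sort mset_filter size_mset)
  finally show ?thesis using j(2) by simp
qed

lemma card_middle_index: "card {t. t < c \<and> 2 * t + 1 = c} = c - 2 * (c div 2)"
proof (cases "even c")
  case True
  then have "{t. t < c \<and> 2 * t + 1 = c} = {}" by auto
  then show ?thesis using True by simp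
next
  case False
  then have "{t. t < c \<and> 2 * t + 1 = c} = {c div 2}" by auto presburger+
  then show ?thesis using False by simp presburger
qed

lemma card_lower_half: "card {t. t < c \<and> t < c div 2} = c div 2"
proof -
  have "{t. t < c \<and> t < c div 2} = {..<c div 2}" by auto
  then show ?thesis by simp
qed

section \<open>Signed involutions\<close>

definition signed_letter :: "bool \<Rightarrow> nat \<Rightarrow> letter" where
  "signed_letter b m = (if b then B m else U m)"

lemma signed_letter_simps [simp]:
  "signed_letter False m = U m" "signed_letter True m = B m"
  "absl (signed_letter b m) = m" "barred (signed_letter b m) = b"
  by (simp_all add: signed_letter_def)

locale signed_involution =
  fixes n :: nat and \<tau> :: "nat \<Rightarrow> nat" and \<beta> :: "nat \<Rightarrow> bool" and \<pi> :: "nat \<Rightarrow> letter"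
  assumes \<tau>_less: "k < n \<Longrightarrow> \<tau> k < n"
    and \<tau>_\<tau>: "k < n \<Longrightarrow> \<tau> (\<tau> k) = k"
    and \<beta>_\<tau>: "k < n \<Longrightarrow> \<beta> (\<tau> k) = \<beta> k"
    and \<pi>_Suc: "k < n \<Longrightarrow> \<pi> (Suc k) = signed_letter (\<beta> k) (Suc (\<tau> k))"
begin

lemma in_Bn: "in_Bn n \<pi>"
proof -
  have "absl (\<pi> j) \<in> {1..n} \<and> absl (\<pi> (absl (\<pi> j))) = j" if j: "j \<in> {1..n}" for j
  proof -
    obtain k where k: "j = Suc k" "k < n" using j by (cases j) auto
    then show ?thesis
      using \<tau>_less[OF k(2)] \<tau>_\<tau>[OF k(2)] \<pi>_Suc[OF k(2)] \<pi>_Suc[OF \<tau>_less[OF k(2)]] by auto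
  qed
  then show ?thesis
    unfolding in_Bn_def by (intro bij_betw_byWitness[where f' = "\<lambda>j. absl (\<pi> j)"]) auto
qed

lemma is_involution: "is_involution n \<pi>"
  unfolding is_involution_def
proof
  fix j assume "j \<in> {1..n}"
  then obtain k where k: "j = Suc k" "k < n" by (cases j) auto
  show "\<pi> j = U j \<or> \<pi> j = B j \<or>
      (\<exists>l\<in>{1..n}. l \<noteq> j \<and> (\<pi> j = U l \<and> \<pi> l = U j \<or> \<pi> j = B l \<and> \<pi> l = B j))"
  proof (cases "\<tau> k = k")
    case True
    then show ?thesis using k \<pi>_Suc[of k] by (cases "\<beta> k") auto
  next
    case False
    then show ?thesis
      using k \<pi>_Suc[OF k(2)] \<pi>_Suc[OF \<tau>_less[OF k(2)]] \<tau>_less[OF k(2)] \<tau>_\<tau>[OF k(2)] \<beta>_\<tau>[OF k(2)]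
      by (cases "\<beta> k") (auto intro!: bexI[where x = "Suc (\<tau> k)"])
  qed
qed

lemma card_fixed_points:
  "card {j \<in> {1..n}. \<pi> j = signed_letter b j} = card {k. k < n \<and> \<beta> k = b \<and> \<tau> k = k}"
proof -
  have "{j \<in> {1..n}. \<pi> j = signed_letter b j} = Suc ` {k. k < n \<and> \<beta> k = b \<and> \<tau> k = k}"
  proof (intro equalityI subsetI)
    fix j assume "j \<in> {j \<in> {1..n}. \<pi> j = signed_letter b j}"
    then show "j \<in> Suc ` {k. k < n \<and> \<beta> k = b \<and> \<tau> k = k}"
      using \<pi>_Suc signed_letter_def by (cases j) (auto split: if_splits)
  qed (auto simp: \<pi>_Suc)
  then show ?thesis by (simp add: card_image)
qed

lemma card_two_cycles:
  "card {(j, l). j \<in> {1..n} \<and> l \<in> {1..n} \<and> j < l \<and> \<pi> j = signed_letter b l \<and> \<pi> l = signed_letter b j}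
     = card {k. k < n \<and> \<beta> k = b \<and> k < \<tau> k}"
proof -
  have "{(j, l). j \<in> {1..n} \<and> l \<in> {1..n} \<and> j < l \<and> \<pi> j = signed_letter b l \<and> \<pi> l = signed_letter b j}
      = (\<lambda>k. (Suc k, Suc (\<tau> k))) ` {k. k < n \<and> \<beta> k = b \<and> k < \<tau> k}"
  proof (intro equalityI subsetI)
    fix x assume "x \<in> {(j, l). j \<in> {1..n} \<and> l \<in> {1..n} \<and> j < l
        \<and> \<pi> j = signed_letter b l \<and> \<pi> l = signed_letter b j}"
    then obtain k l where "x = (Suc k, l)" "k < n" "\<pi> (Suc k) = signed_letter b l" "Suc k < l"
      by (cases x; rename_tac j l; case_tac j) auto
    then show "x \<in> (\<lambda>k. (Suc k, Suc (\<tau> k))) ` {k. k < n \<and> \<beta> k = b \<and> k < \<tau> k}"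
      using \<pi>_Suc[of k] signed_letter_def by (auto split: if_splits)
  next
    fix x assume "x \<in> (\<lambda>k. (Suc k, Suc (\<tau> k))) ` {k. k < n \<and> \<beta> k = b \<and> k < \<tau> k}"
    then obtain k where "x = (Suc k, Suc (\<tau> k))" "k < n" "\<beta> k = b" "k < \<tau> k" by auto
    then show "x \<in> {(j, l). j \<in> {1..n} \<and> l \<in> {1..n} \<and> j < l
        \<and> \<pi> j = signed_letter b l \<and> \<pi> l = signed_letter b j}"
      using \<pi>_Suc[of k] \<pi>_Suc[of "\<tau> k"] \<tau>_less[of k] \<tau>_\<tau>[of k] \<beta>_\<tau>[of k] by auto
  qed
  moreover have "inj (\<lambda>k. (Suc k, Suc (\<tau> k)))" by (rule injI) simp
  ultimately show ?thesis by (simp add: card_image inj_on_subset)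
qed

end

section \<open>Colored biletters\<close>

lemma prec_iff_bkey_less: "prec p q \<longleftrightarrow> bkey p < bkey q"
proof (cases p; cases q)
  fix x y k l assume "p = (x, y)" "q = (k, l)"
  then show ?thesis
    by (cases x; cases k; cases y; cases l) (auto simp: prec_def bkey_def)
qed

lemma canonical_iff_sorted_bkey: "canonical w \<longleftrightarrow> sorted (map bkey w)"
  by (simp add: canonical_def sorted_map prec_iff_bkey_less not_less)

lemma bkey_simps [simp]:
  "bkey (U a, U b) = (int a, 1, int b)"
  "bkey (U a, B b) = (int a, 1, - int b)"
  "bkey (B a, U b) = (int a, 0, - int b)"
  by (simp_all add: bkey_def)

text \<open>Positivity of the bottom letter matters: \<open>(U a, U 0)\<close> and \<open>(U a, B 0)\<close> have the same key.\<close>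

definition colored_biletter :: "biletter \<Rightarrow> bool" where
  "colored_biletter p \<longleftrightarrow> \<not> barred (fst p) \<and> absl (fst p) \<ge> 1 \<and> absl (snd p) \<ge> 1"

lemma colored_biletterE:
  assumes "colored_biletter p"
  obtains a b where "p = (U a, U b)" "a \<ge> 1" "b \<ge> 1"
    | a b where "p = (U a, B b)" "a \<ge> 1" "b \<ge> 1"
  using assms unfolding colored_biletter_def
  by (cases p; rename_tac x y; case_tac x; case_tac y) auto

lemma bkey_inj_colored:
  "colored_biletter p \<Longrightarrow> colored_biletter q \<Longrightarrow> bkey p = bkey q \<Longrightarrow> p = q"
  by (elim colored_biletterE) auto

definition inv_r_biletter :: "biletter \<Rightarrow> biletter" where
  "inv_r_biletter = (\<lambda>(x, y). (U (absl y), if barred y then B (absl x) else U (absl x)))"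

lemma inv_r_eq_canon_map: "inv_r w = canon (map inv_r_biletter w)"
  by (simp add: inv_r_def inv_r_biletter_def)

lemma inv_r_biletter_simps [simp]:
  "inv_r_biletter (U a, U b) = (U b, U a)"
  "inv_r_biletter (U a, B b) = (U b, B a)"
  by (simp_all add: inv_r_biletter_def)

lemma inv_r_biletter_involutive: "colored_biletter p \<Longrightarrow> inv_r_biletter (inv_r_biletter p) = p"
  by (elim colored_biletterE) auto

lemma barred_snd_inv_r_biletter:
  "colored_biletter p \<Longrightarrow> barred (snd (inv_r_biletter p)) = barred (snd p)"
  by (elim colored_biletterE) auto

section \<open>Standardisation of a colored involution\<close>

locale colored_inv =
  fixes w :: "biletter list"
  assumes colored_involution: "colored_involution w"
begin

abbreviation "n \<equiv> length w"
abbreviation "occ \<equiv> occ_index w"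
abbreviation "cnt q \<equiv> count (mset w) q"

definition below :: "biletter \<Rightarrow> nat" where
  "below q = length (filter (\<lambda>p. bkey p < bkey q) w)"

lemma colored_nth: "k < n \<Longrightarrow> colored_biletter (w ! k)"
  using colored_involution nth_mem
  unfolding colored_involution_def colored_biword_def doubly_colored_biword_def
    pos_letters_def colored_biletter_def by fastforce

lemma sorted_bkey: "sorted (map bkey w)"
  using colored_involution
  by (simp add: colored_involution_def colored_biword_def doubly_colored_biword_def
      canonical_iff_sorted_bkey)

lemma inj_on_bkey: "inj_on bkey (set w)"
  by (rule inj_onI) (metis bkey_inj_colored colored_nth in_set_conv_nth)

lemma mset_map_inv_r_biletter: "mset (map inv_r_biletter w) = mset w"
  using colored_involution
  unfolding colored_involution_def inv_r_eq_canon_map canon_def by (metis mset_sort)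

lemma cnt_inv_r_biletter:
  assumes "colored_biletter p"
  shows "cnt (inv_r_biletter p) = cnt p"
proof -
  have "cnt (inv_r_biletter p) = count (mset (map inv_r_biletter w)) (inv_r_biletter p)"
    by (simp only: mset_map_inv_r_biletter)
  also have "\<dots> = length (filter (\<lambda>q. inv_r_biletter p = inv_r_biletter q) w)"
    by (simp only: count_mset count_list_eq_length_filter) (simp add: o_def)
  also have "\<dots> = length (filter ((=) p) w)"
  proof (intro arg_cong[where f = length] filter_cong refl)
    fix q assume "q \<in> set w"
    then have "colored_biletter q" using colored_nth by (auto simp: in_set_conv_nth)
    then show "(inv_r_biletter p = inv_r_biletter q) = (p = q)"
      using assms by (metis inv_r_biletter_involutive)
  qed
  also have "\<dots> = cnt p"
    by (simp add: count_mset count_list_eq_length_filter)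
  finally show ?thesis .
qed

lemma position_eq_below_plus_occ: "k < n \<Longrightarrow> k = below (w ! k) + occ k"
  unfolding below_def using sorted_bkey inj_on_bkey by (rule sorted_nth_eq_rank_plus_occ_index)

lemma below_eq_card_inv_r_biletter:
  "below q = card {k. k < n \<and> bkey (inv_r_biletter (w ! k)) < bkey q}"
proof -
  have "below q = length (filter (\<lambda>p. bkey p < bkey q) (map inv_r_biletter w))"
    unfolding below_def by (metis mset_filter mset_map_inv_r_biletter size_mset)
  then show ?thesis by (simp add: filter_map o_def length_filter_conv_card)
qed

definition inv_entry :: "nat \<Rightarrow> biletter" where
  "inv_entry k = (snd (w ! k), U (Suc k))"

definition \<tau> :: "nat \<Rightarrow> nat" where
  "\<tau> k = card {k'. k' < n \<and> bkey (inv_entry k') < bkey (inv_entry k)}"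

definition partner_occ :: "nat \<Rightarrow> nat" where
  "partner_occ k = (if barred (snd (w ! k)) then cnt (w ! k) - 1 - occ k else occ k)"

text \<open>
  Sorting the inverted entries amounts to sorting \<open>w\<close> by \<open>inv_r_biletter\<close>, with ties between
  equal biletters broken by position, in reverse for a barred bottom letter.
\<close>

lemma bkey_inv_entry_less_iff:
  assumes k: "k < n" and k': "k' < n"
  shows "bkey (inv_entry k') < bkey (inv_entry k) \<longleftrightarrow>
      bkey (inv_r_biletter (w ! k')) < bkey (inv_r_biletter (w ! k))
    \<or> (w ! k' = w ! k \<and> (if barred (snd (w ! k)) then k < k' else k' < k))"
proof -
  have "k' < k \<Longrightarrow> bkey (w ! k') \<le> bkey (w ! k)" and "k < k' \<Longrightarrow> bkey (w ! k) \<le> bkey (w ! k')"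
    using sorted_nth_mono[OF sorted_bkey, of k' k] sorted_nth_mono[OF sorted_bkey, of k k'] k k'
    by simp_all
  moreover have "k' < k \<or> k' = k \<or> k < k'" by arith
  ultimately show ?thesis
    using colored_nth[OF k] colored_nth[OF k'] by (elim colored_biletterE) (auto simp: inv_entry_def)
qed

lemma card_same_before_partner:
  assumes k: "k < n"
  shows "card {k'. k' < n \<and> w ! k' = w ! k \<and> (if barred (snd (w ! k)) then k < k' else k' < k)}
    = partner_occ k"
proof (cases "barred (snd (w ! k))")
  case False
  then have "{k'. k' < n \<and> w ! k' = w ! k \<and> (if barred (snd (w ! k)) then k < k' else k' < k)}
     = {k'. k' < k \<and> w ! k' = w ! k}" using k by auto
  then show ?thesis using False by (simp add: partner_occ_def occ_index_def)
next
  case True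
  let ?A = "{k'. k' < n \<and> w ! k' = w ! k \<and> k < k'}"
  have "{k'. k' < n \<and> w ! k' = w ! k} = {k'. k' < k \<and> w ! k' = w ! k} \<union> ({k} \<union> ?A)"
    using k by auto
  then have "cnt (w ! k) = card ({k'. k' < k \<and> w ! k' = w ! k} \<union> ({k} \<union> ?A))"
    by (simp add: count_mset_eq_card_positions)
  also have "\<dots> = occ k + (1 + card ?A)"
    unfolding occ_index_def by (subst card_Un_disjoint; auto)+
  finally show ?thesis using True by (simp add: partner_occ_def)
qed

lemma \<tau>_eq: assumes k: "k < n" shows "\<tau> k = below (inv_r_biletter (w ! k)) + partner_occ k"
proof -
  let ?A = "{k'. k' < n \<and> bkey (inv_r_biletter (w ! k')) < bkey (inv_r_biletter (w ! k))}"
  let ?B = "{k'. k' < n \<and> w ! k' = w ! k \<and> (if barred (snd (w ! k)) then k < k' else k' < k)}"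
  have "{k'. k' < n \<and> bkey (inv_entry k') < bkey (inv_entry k)} = ?A \<union> ?B"
    using bkey_inv_entry_less_iff[OF k] by blast
  moreover have "?A \<inter> ?B = {}" by auto
  ultimately have "\<tau> k = card ?A + card ?B"
    unfolding \<tau>_def by (simp add: card_Un_disjoint)
  then show ?thesis
    using below_eq_card_inv_r_biletter card_same_before_partner[OF k] by simp
qed

lemma \<tau>_partner:
  assumes k: "k < n"
  shows "\<tau> k < n" and "w ! \<tau> k = inv_r_biletter (w ! k)" and "occ (\<tau> k) = partner_occ k"
proof -
  have "partner_occ k < cnt (inv_r_biletter (w ! k))"
    using occ_index_less_count[OF k] cnt_inv_r_biletter[OF colored_nth[OF k]]
    by (auto simp: partner_occ_def)
  then have "partner_occ k \<in> occ ` {m. m < n \<and> w ! m = inv_r_biletter (w ! k)}"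
    using bij_betw_imp_surj_on[OF bij_betw_occ_index[of w "inv_r_biletter (w ! k)"]] by simp
  then obtain m where m: "m < n" "w ! m = inv_r_biletter (w ! k)" "occ m = partner_occ k"
    by auto
  moreover have "m = \<tau> k"
  proof -
    have "m = below (w ! m) + occ m"
      using m(1) by (rule position_eq_below_plus_occ)
    also have "\<dots> = below (inv_r_biletter (w ! k)) + partner_occ k"
      using m(2,3) by simp
    finally show ?thesis
      using \<tau>_eq[OF k] by simp
  qed
  ultimately show "\<tau> k < n" "w ! \<tau> k = inv_r_biletter (w ! k)" "occ (\<tau> k) = partner_occ k"
    by simp_all
qed

lemma \<tau>_\<tau>: assumes k: "k < n" shows "\<tau> (\<tau> k) = k"
proof -
  have colored: "colored_biletter (w ! k)" using colored_nth[OF k] .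
  have "partner_occ (\<tau> k) = occ k"
    using \<tau>_partner[OF k] occ_index_less_count[OF k] barred_snd_inv_r_biletter[OF colored]
      cnt_inv_r_biletter[OF colored]
    by (auto simp: partner_occ_def)
  then have "\<tau> (\<tau> k) = below (w ! k) + occ k"
    using \<tau>_eq[OF \<tau>_partner(1)[OF k]] \<tau>_partner(2)[OF k] inv_r_biletter_involutive[OF colored]
    by simp
  also have "\<dots> = k"
    using position_eq_below_plus_occ[OF k, symmetric] .
  finally show ?thesis .
qed

lemma swap_st_bar: "map (\<lambda>(x, y). (y, x)) (st_bar w) = map inv_entry [0..<n]"
proof -
  have "fst (w ! k) = U (absl (fst (w ! k)))" if "k < n" for k
    using colored_nth[OF that] by (elim colored_biletterE) auto
  then show ?thesis
    unfolding st_bar_def inv_entry_def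
    by (auto simp: case_prod_beta Let_def colored_biletter_def dest!: colored_nth)
qed

lemma nth_inv_bw_st_bar: assumes k: "k < n" shows "inv_bw (st_bar w) ! \<tau> k = inv_entry k"
proof -
  have "inj_on (bkey \<circ> inv_entry) {0..<n}"
  proof (rule inj_onI)
    fix k k' assume "(bkey \<circ> inv_entry) k = (bkey \<circ> inv_entry) k'"
    then show "k = k'"
      by (cases "snd (w ! k)"; cases "snd (w ! k')") (auto simp: inv_entry_def)
  qed
  then have "distinct (map bkey (map inv_entry [0..<n]))"
    by (simp add: distinct_map)
  then have "sort_key bkey (map inv_entry [0..<n])
      ! length (filter (\<lambda>p. bkey p < bkey (inv_entry k)) (map inv_entry [0..<n])) = inv_entry k"
    using k by (intro nth_sort_key_rank) auto
  moreover have "\<tau> k = length (filter (\<lambda>p. bkey p < bkey (inv_entry k)) (map inv_entry [0..<n]))"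
    by (simp add: \<tau>_def filter_map o_def length_filter_conv_card cong: conj_cong)
  ultimately show ?thesis
    unfolding inv_bw_def canon_def swap_st_bar by simp
qed

definition st_entry :: "nat \<Rightarrow> biletter" where
  "st_entry k = (U (Suc k), signed_letter (barred (snd (w ! k))) (Suc (\<tau> k)))"

lemma st_eq: "st w = map st_entry [0..<n]"
proof -
  let ?v = "inv_bw (st_bar w)"
  have len: "length ?v = n"
    by (simp add: inv_bw_def canon_def st_bar_def)
  have nth_v: "?v ! j = inv_entry (\<tau> j)" if "j < n" for j
    using nth_inv_bw_st_bar[OF \<tau>_partner(1)[OF that]] \<tau>_\<tau>[OF that] by simp
  have swap: "map (\<lambda>(x, y). (y, x)) (st_bar ?v) = map (st_entry \<circ> \<tau>) [0..<n]"
    unfolding st_bar_def[of ?v] len map_map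
    by (rule map_cong[OF refl])
      (simp add: nth_v Let_def inv_entry_def st_entry_def signed_letter_def \<tau>_\<tau>)
  have "bij_betw \<tau> {0..<n} {0..<n}"
    by (rule bij_betw_byWitness[where f' = \<tau>]) (auto simp: \<tau>_\<tau> \<tau>_partner(1))
  then have "image_mset \<tau> (mset [0..<n]) = mset [0..<n]"
    by (simp add: image_mset_mset_set bij_betw_def)
  then have mset_eq: "mset (map (st_entry \<circ> \<tau>) [0..<n]) = mset (map st_entry [0..<n])"
    by (metis mset_map multiset.map_comp)
  have "inj_on bkey (set (map (st_entry \<circ> \<tau>) [0..<n]))"
    unfolding mset_eq_setD[OF mset_eq]
    by (rule inj_onI) (auto simp: st_entry_def signed_letter_def split: if_splits)
  moreover have "sorted (map bkey (map st_entry [0..<n]))"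
    by (auto simp: sorted_iff_nth_mono_less st_entry_def signed_letter_def)
  ultimately have "sort_key bkey (map (st_entry \<circ> \<tau>) [0..<n]) = map st_entry [0..<n]"
    by (rule sort_key_inj_key_eq[OF mset_eq])
  then show ?thesis
    unfolding st_def inv_bw_def[of "st_bar ?v"] canon_def swap .
qed

lemma bottom_st_Suc:
  "k < n \<Longrightarrow> bottom (st w) (Suc k) = signed_letter (barred (snd (w ! k))) (Suc (\<tau> k))"
  by (simp add: bottom_def st_eq st_entry_def)

sublocale signed_involution n \<tau> "\<lambda>k. barred (snd (w ! k))" "bottom (st w)"
proof
  fix k assume k: "k < n"
  show "\<tau> k < n" by (rule \<tau>_partner(1)[OF k])
  show "\<tau> (\<tau> k) = k" by (rule \<tau>_\<tau>[OF k])
  show "barred (snd (w ! \<tau> k)) = barred (snd (w ! k))"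
    using \<tau>_partner(2)[OF k] barred_snd_inv_r_biletter[OF colored_nth[OF k]] by simp
  show "bottom (st w) (Suc k) = signed_letter (barred (snd (w ! k))) (Suc (\<tau> k))"
    by (rule bottom_st_Suc[OF k])
qed

lemma below_add_cnt_le: "bkey p < bkey q \<Longrightarrow> below p + cnt p \<le> below q"
proof -
  assume less: "bkey p < bkey q"
  have "below p + cnt p = card ({k. k < n \<and> bkey (w ! k) < bkey p} \<union> {k. k < n \<and> w ! k = p})"
    unfolding below_def length_filter_conv_card count_mset_eq_card_positions
    by (subst card_Un_disjoint) auto
  also have "\<dots> \<le> below q"
    unfolding below_def length_filter_conv_card using less by (intro card_mono) auto
  finally show ?thesis .
qed

lemma \<tau>_cases_unbarred:
  assumes k: "k < n" and wk: "w ! k = (U a, U b)"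
  shows "(\<tau> k = k \<longleftrightarrow> a = b) \<and> (k < \<tau> k \<longleftrightarrow> a < b)"
proof -
  have \<tau>k: "\<tau> k = below (U b, U a) + occ k"
    using \<tau>_eq[OF k] wk by (simp add: partner_occ_def)
  have pos: "below (U a, U b) + occ k = k"
    using position_eq_below_plus_occ[OF k] wk by simp
  have occ: "occ k < cnt (U a, U b)"
    using occ_index_less_count[OF k] wk by simp
  have cnt: "cnt (U b, U a) = cnt (U a, U b)"
    using cnt_inv_r_biletter[OF colored_nth[OF k]] wk by simp
  show ?thesis
  proof (cases a b rule: linorder_cases)
    case less
    then have "below (U a, U b) + cnt (U a, U b) \<le> below (U b, U a)"
      by (intro below_add_cnt_le) simp
    then show ?thesis using less \<tau>k pos occ by simp
  next
    case equal
    then show ?thesis using \<tau>k pos by simp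
  next
    case greater
    then have "below (U b, U a) + cnt (U b, U a) \<le> below (U a, U b)"
      by (intro below_add_cnt_le) simp
    then show ?thesis using greater \<tau>k pos occ cnt by simp
  qed
qed

lemma \<tau>_cases_barred:
  assumes k: "k < n" and wk: "w ! k = (U a, B b)"
  shows "(\<tau> k = k \<longleftrightarrow> a = b \<and> 2 * occ k + 1 = cnt (w ! k))
       \<and> (k < \<tau> k \<longleftrightarrow> a < b \<or> (a = b \<and> occ k < cnt (w ! k) div 2))"
proof -
  have \<tau>k: "\<tau> k = below (U b, B a) + (cnt (U a, B b) - 1 - occ k)"
    using \<tau>_eq[OF k] wk by (simp add: partner_occ_def)
  have pos: "below (U a, B b) + occ k = k"
    using position_eq_below_plus_occ[OF k] wk by simp
  have occ: "occ k < cnt (U a, B b)"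
    using occ_index_less_count[OF k] wk by simp
  have cnt: "cnt (U b, B a) = cnt (U a, B b)"
    using cnt_inv_r_biletter[OF colored_nth[OF k]] wk by simp
  show ?thesis
  proof (cases a b rule: linorder_cases)
    case less
    then have "below (U a, B b) + cnt (U a, B b) \<le> below (U b, B a)"
      by (intro below_add_cnt_le) simp
    then show ?thesis using less \<tau>k pos occ wk by (simp; arith)
  next
    case equal
    then show ?thesis using \<tau>k pos occ wk by auto
  next
    case greater
    then have "below (U b, B a) + cnt (U b, B a) \<le> below (U a, B b)"
      by (intro below_add_cnt_le) simp
    then show ?thesis using greater \<tau>k pos occ cnt wk by (simp; arith)
  qed
qed

abbreviation "val_pairs \<equiv> {(i, j). i \<in> vals w \<and> j \<in> vals w \<and> i < j}"

lemma finite_val_pairs: "finite val_pairs"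
  by (rule finite_subset[of _ "vals w \<times> vals w"]) (auto simp: vals_def)

lemma position_classification:
  assumes k: "k < n"
  shows "(\<not> barred (snd (w ! k)) \<and> \<tau> k = k \<longleftrightarrow> (\<exists>i\<in>vals w. w ! k = (U i, U i)))
    \<and> (barred (snd (w ! k)) \<and> \<tau> k = k \<longleftrightarrow>
        (\<exists>i\<in>vals w. w ! k = (U i, B i) \<and> 2 * occ k + 1 = bcnt w i))
    \<and> (\<not> barred (snd (w ! k)) \<and> k < \<tau> k \<longleftrightarrow> (\<exists>(i, j)\<in>val_pairs. w ! k = (U i, U j)))
    \<and> (barred (snd (w ! k)) \<and> k < \<tau> k \<longleftrightarrow>
        (\<exists>(i, j)\<in>val_pairs. w ! k = (U i, B j))
        \<or> (\<exists>i\<in>vals w. w ! k = (U i, B i) \<and> occ k < bcnt w i div 2))"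
proof -
  have vals: "absl (fst (w ! k)) \<in> vals w" "absl (snd (w ! k)) \<in> vals w"
    using nth_mem[OF k] unfolding vals_def by force+
  from colored_nth[OF k] show ?thesis
  proof (cases rule: colored_biletterE)
    case (1 a b)
    then show ?thesis using \<tau>_cases_unbarred[OF k] vals by auto
  next
    case (2 a b)
    then show ?thesis using \<tau>_cases_barred[OF k] vals by (auto simp: bcnt_def)
  qed
qed

lemma fixed_points_st: "fixed_points n (bottom (st w)) = (\<Sum>i\<in>vals w. acnt w i)"
proof -
  have "fixed_points n (bottom (st w)) = card {k. k < n \<and> \<not> barred (snd (w ! k)) \<and> \<tau> k = k}"
    using card_fixed_points[of False] by (simp add: fixed_points_def)
  also have "\<dots> = card {k. k < n \<and> (\<exists>i\<in>vals w. w ! k = (U i, U i))}"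
    by (rule arg_cong[where f = card], rule Collect_cong) (use position_classification in blast)
  also have "\<dots> = (\<Sum>i\<in>vals w. acnt w i)"
    by (subst card_positions_in_image) (auto simp: vals_def inj_on_def acnt_def)
  finally show ?thesis .
qed

lemma barred_fixed_points_st:
  "barred_fixed_points n (bottom (st w)) = (\<Sum>i\<in>vals w. bcnt w i - 2 * (bcnt w i div 2))"
proof -
  have "barred_fixed_points n (bottom (st w)) = card {k. k < n \<and> barred (snd (w ! k)) \<and> \<tau> k = k}"
    using card_fixed_points[of True] by (simp add: barred_fixed_points_def)
  also have "\<dots> = card {k. k < n \<and>
      (\<exists>i\<in>vals w. w ! k = (U i, B i) \<and> 2 * occ k + 1 = bcnt w i)}"
    by (rule arg_cong[where f = card], rule Collect_cong) (use position_classification in blast)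
  also have "\<dots> = (\<Sum>i\<in>vals w. card {t. t < bcnt w i \<and> 2 * t + 1 = bcnt w i})"
    using card_positions_occ_index[of "vals w" "\<lambda>i. (U i, B i)" w "\<lambda>i t. 2 * t + 1 = bcnt w i"]
    by (simp add: vals_def inj_on_def bcnt_def)
  also have "\<dots> = (\<Sum>i\<in>vals w. bcnt w i - 2 * (bcnt w i div 2))"
    by (rule sum.cong[OF refl card_middle_index])
  finally show ?thesis .
qed

lemma two_cycles_st:
  "two_cycles n (bottom (st w)) = (\<Sum>(i, j)\<in>val_pairs. ccnt w i j)"
proof -
  have "two_cycles n (bottom (st w)) = card {k. k < n \<and> \<not> barred (snd (w ! k)) \<and> k < \<tau> k}"
    using card_two_cycles[of False] by (simp add: two_cycles_def)
  also have "\<dots> = card {k. k < n \<and> (\<exists>x\<in>val_pairs. w ! k = (\<lambda>(i, j). (U i, U j)) x)}"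
    by (rule arg_cong[where f = card], rule Collect_cong) (use position_classification in fastforce)
  also have "\<dots> = (\<Sum>(i, j)\<in>val_pairs. ccnt w i j)"
    by (subst card_positions_in_image)
      (auto simp: finite_val_pairs inj_on_def ccnt_def intro!: sum.cong)
  finally show ?thesis .
qed

lemma barred_two_cycles_st:
  "barred_two_cycles n (bottom (st w))
     = (\<Sum>(i, j)\<in>val_pairs. dcnt w i j) + (\<Sum>i\<in>vals w. bcnt w i div 2)"
proof -
  let ?A = "{k. k < n \<and> (\<exists>x\<in>val_pairs. w ! k = (\<lambda>(i, j). (U i, B j)) x)}"
  let ?B = "{k. k < n \<and> (\<exists>i\<in>vals w. w ! k = (U i, B i) \<and> occ k < bcnt w i div 2)}"
  have "barred_two_cycles n (bottom (st w)) = card {k. k < n \<and> barred (snd (w ! k)) \<and> k < \<tau> k}"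
    using card_two_cycles[of True] by (simp add: barred_two_cycles_def)
  also have "\<dots> = card (?A \<union> ?B)"
    by (rule arg_cong[where f = card], rule set_eqI) (use position_classification in fastforce)
  also have "\<dots> = card ?A + card ?B"
    by (rule card_Un_disjoint) auto
  also have "card ?A = (\<Sum>(i, j)\<in>val_pairs. dcnt w i j)"
    by (subst card_positions_in_image)
      (auto simp: finite_val_pairs inj_on_def dcnt_def intro!: sum.cong)
  also have "card ?B = (\<Sum>i\<in>vals w. card {t. t < bcnt w i \<and> t < bcnt w i div 2})"
    using card_positions_occ_index[of "vals w" "\<lambda>i. (U i, B i)" w "\<lambda>i t. t < bcnt w i div 2"]
    by (simp add: vals_def inj_on_def bcnt_def)
  also have "\<dots> = (\<Sum>i\<in>vals w. bcnt w i div 2)"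
    by (simp add: card_lower_half)
  finally show ?thesis .
qed

end

theorem lemma5:
  assumes "colored_involution w"
  shows "in_Bn (length w) (bottom (st w))
       \<and> is_involution (length w) (bottom (st w))
       \<and> fixed_points (length w) (bottom (st w)) = (\<Sum>i\<in>vals w. acnt w i)
       \<and> barred_fixed_points (length w) (bottom (st w))
           = (\<Sum>i\<in>vals w. bcnt w i - 2 * (bcnt w i div 2))
       \<and> two_cycles (length w) (bottom (st w))
           = (\<Sum>(i, j)\<in>{(i, j). i \<in> vals w \<and> j \<in> vals w \<and> i < j}. ccnt w i j)
       \<and> barred_two_cycles (length w) (bottom (st w))
           = (\<Sum>(i, j)\<in>{(i, j). i \<in> vals w \<and> j \<in> vals w \<and> i < j}. dcnt w i j)
             + (\<Sum>i\<in>vals w. bcnt w i div 2)"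
proof -
  interpret colored_inv w using assms by unfold_locales
  show ?thesis
    using in_Bn is_involution fixed_points_st barred_fixed_points_st two_cycles_st
      barred_two_cycles_st
    by blast
qed

end
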